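(* In the setting below, there is an absolute constant $C'>0$ such that the random variable $E^{\mathbf L,\pi}_{n_1}=\mathbb E[U^{\mathbf L,\pi}_{n_1}\mid\mathbf L,\pi]$ is $\mathrm{SE}(C'\,\mathbb E[U_{n_1,n_2}]/n_1)$.
   Context: Setting: $2\le n_1\le n_2$; $\mathbf Z_1,\dots,\mathbf Z_{n_1},\mathbf W_1,\dots,\mathbf W_{n_2}$ mutually independent random vectors in $\mathbb R^d$, the $\mathbf Z_i$ identically distributed, the $\mathbf W_{i'}$ identically distributed, each sub-Gaussian. Pooled sample $\mathbf D_i=\mathbf Z_i$ ($i\le n_1$), $\mathbf D_{n_1+i'}=\mathbf W_{i'}$. Let $\pi$ be uniform on $S_{n_1+n_2}$ and $\mathbf L=(l_1,\dots,l_{n_1})$ a uniformly random $n_1$-tuple of distinct elements of $[n_2]$, with $\pi$, $\mathbf L$ and the data mutually independent. Define $U^{\mathbf L,\pi}_{n_1}=\frac{1}{n_1(n_1-1)}\sum_{i\ne j,\ i,j\in[n_1]}(\mathbf D_{\pi(i)}-\mathbf D_{\pi(n_1+l_i)})^T(\mathbf D_{\pi(j)}-\mathbf D_{\pi(n_1+l_j)})$. Here $\mathbb E[U_{n_1,n_2}]=\|\mathbb E\mathbf Z_1-\mathbb E\mathbf W_1\|_2^2$. A real random variable $X$ is $\mathrm{SE}(\sigma)$ if $\mathbb E[\exp\{\lambda(X-\mathbb EX)\}]\le\exp(\lambda^2\sigma^2)$ for all $|\lambda|\le1/\sigma$. *)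

theory Defs
  imports "HOL-Probability.Probability"
begin

text \<open>Vectors of R^d are represented as functions nat => real; only the
coordinates k < d matter. The dimension d is an explicit natural number so
that the constant C' can be stated to be independent of d.\<close>

definition ipd :: "nat \<Rightarrow> (nat \<Rightarrow> real) \<Rightarrow> (nat \<Rightarrow> real) \<Rightarrow> real" where
  "ipd d a b = (\<Sum>k<d. a k * b k)"

definition mean_vec :: "(nat \<Rightarrow> real) measure \<Rightarrow> nat \<Rightarrow> real" where
  "mean_vec P = (\<lambda>k. \<integral>x. x k \<partial>P)"

definition subgaussian_vec :: "nat \<Rightarrow> (nat \<Rightarrow> real) measure \<Rightarrow> bool" where
  "subgaussian_vec d P \<longleftrightarrow>
     (\<forall>k<d. integrable P (\<lambda>x. x k)) \<and>
     (\<exists>\<sigma>>0. \<forall>u. ipd d u u = 1 \<longrightarrow> (\<forall>t::real.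
        integrable P (\<lambda>x. exp (t * ipd d u (x - mean_vec P))) \<and>
        (\<integral>x. exp (t * ipd d u (x - mean_vec P)) \<partial>P) \<le> exp (t\<^sup>2 * \<sigma>\<^sup>2 / 2)))"

definition SE :: "'a measure \<Rightarrow> ('a \<Rightarrow> real) \<Rightarrow> real \<Rightarrow> bool" where
  "SE M X \<sigma> \<longleftrightarrow> (\<forall>t::real. \<sigma> * \<bar>t\<bar> \<le> 1 \<longrightarrow>
      integrable M (\<lambda>\<omega>. exp (t * (X \<omega> - (\<integral>\<omega>'. X \<omega>' \<partial>M)))) \<and>
      (\<integral>\<omega>. exp (t * (X \<omega> - (\<integral>\<omega>'. X \<omega>' \<partial>M))) \<partial>M) \<le> exp (t\<^sup>2 * \<sigma>\<^sup>2))"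

text \<open>Joint law of the pooled sample D_0,...,D_{n1+n2-1} (0-based):
independent, D_k ~ P for k < n1 (the Z's), D_k ~ Q otherwise (the W's).\<close>
definition data_law :: "nat \<Rightarrow> nat \<Rightarrow> (nat \<Rightarrow> real) measure \<Rightarrow> (nat \<Rightarrow> real) measure
    \<Rightarrow> (nat \<Rightarrow> (nat \<Rightarrow> real)) measure" where
  "data_law n1 n2 P Q = (\<Pi>\<^sub>M k\<in>{..<n1+n2}. if k < n1 then P else Q)"

definition perm_tuples :: "nat \<Rightarrow> nat \<Rightarrow> ((nat \<Rightarrow> nat) \<times> nat list) set" where
  "perm_tuples n1 n2 = {p. p permutes {..<n1+n2}} \<times>
                       {l. distinct l \<and> length l = n1 \<and> set l \<subseteq> {..<n2}}"

definition piL_law :: "nat \<Rightarrow> nat \<Rightarrow> ((nat \<Rightarrow> nat) \<times> nat list) measure" where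
  "piL_law n1 n2 = measure_pmf (pmf_of_set (perm_tuples n1 n2))"

definition joint_law :: "nat \<Rightarrow> nat \<Rightarrow> (nat \<Rightarrow> real) measure \<Rightarrow> (nat \<Rightarrow> real) measure
    \<Rightarrow> ((nat \<Rightarrow> (nat \<Rightarrow> real)) \<times> ((nat \<Rightarrow> nat) \<times> nat list)) measure" where
  "joint_law n1 n2 P Q = data_law n1 n2 P Q \<Otimes>\<^sub>M piL_law n1 n2"

definition piL_sigma :: "nat \<Rightarrow> nat \<Rightarrow> (nat \<Rightarrow> real) measure \<Rightarrow> (nat \<Rightarrow> real) measure
    \<Rightarrow> ((nat \<Rightarrow> (nat \<Rightarrow> real)) \<times> ((nat \<Rightarrow> nat) \<times> nat list)) measure" where
  "piL_sigma n1 n2 P Q = vimage_algebra (space (joint_law n1 n2 P Q)) snd (piL_law n1 n2)"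

text \<open>U^{L,pi}_{n1} with 0-based indices: D_{pi(n1+l_i)} becomes x (p (n1 + l!i)).\<close>
definition U_stat :: "nat \<Rightarrow> nat \<Rightarrow> (nat \<Rightarrow> nat) \<Rightarrow> nat list \<Rightarrow> (nat \<Rightarrow> (nat \<Rightarrow> real)) \<Rightarrow> real" where
  "U_stat d n1 p l x = (1 / (real n1 * (real n1 - 1))) *
     (\<Sum>i<n1. \<Sum>j\<in>{..<n1} - {i}.
        ipd d (x (p i) - x (p (n1 + l ! i))) (x (p j) - x (p (n1 + l ! j))))"

definition U_joint :: "nat \<Rightarrow> nat \<Rightarrow> ((nat \<Rightarrow> (nat \<Rightarrow> real)) \<times> ((nat \<Rightarrow> nat) \<times> nat list)) \<Rightarrow> real" where
  "U_joint d n1 \<omega> = U_stat d n1 (fst (snd \<omega>)) (snd (snd \<omega>)) (fst \<omega>)"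

definition E_Lpi :: "nat \<Rightarrow> nat \<Rightarrow> nat \<Rightarrow> (nat \<Rightarrow> real) measure \<Rightarrow> (nat \<Rightarrow> real) measure
    \<Rightarrow> ((nat \<Rightarrow> (nat \<Rightarrow> real)) \<times> ((nat \<Rightarrow> nat) \<times> nat list)) \<Rightarrow> real" where
  "E_Lpi d n1 n2 P Q = real_cond_exp (joint_law n1 n2 P Q) (piL_sigma n1 n2 P Q) (U_joint d n1)"

end

theory Submission
  imports Defs
begin

text \<open>
  Given \<open>(\<pi>, L)\<close>, the summand of \<open>U\<close> for a pair \<open>i \<noteq> j\<close> is a product of two independent
  differences of data points, so only the means survive:
  \<open>E[U | L, \<pi>] = \<parallel>\<mu>\<^sub>P - \<mu>\<^sub>Q\<parallel>\<^sup>2 (S\<^sup>2 - T) / (n\<^sub>1 (n\<^sub>1 - 1))\<close>, where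
  \<open>s\<^sub>i = [\<pi>(i) \<le> n\<^sub>1] - [\<pi>(n\<^sub>1 + l\<^sub>i) \<le> n\<^sub>1] \<in> {-1, 0, 1}\<close>, \<open>S = \<Sum> s\<^sub>i\<close> and
  \<open>T = \<Sum> s\<^sub>i\<^sup>2 \<le> n\<^sub>1\<close>. The sum \<open>S\<close> is a difference of two hypergeometric counts, so by
  Hoeffding's inequality for sampling without replacement it is sub-Gaussian with variance
  proxy \<open>n\<^sub>1\<close>. Hence \<open>exp (S\<^sup>2 / (4 e n\<^sub>1))\<close> has mean at most \<open>8/3\<close>, and a nonnegative
  variable with a bounded exponential moment is sub-exponential, so \<open>S\<^sup>2 / (n\<^sub>1 (n\<^sub>1 - 1))\<close>
  is \<open>SE(O(1/n\<^sub>1))\<close>. The term \<open>T / (n\<^sub>1 (n\<^sub>1 - 1))\<close> lies in \<open>[0, 1/(n\<^sub>1 - 1)]\<close>, and a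
  difference of sub-exponential variables is sub-exponential.
\<close>

section \<open>Uniform averages and exponential inequalities\<close>

definition avg :: "'a set \<Rightarrow> ('a \<Rightarrow> real) \<Rightarrow> real" where
  "avg \<Omega> f = (\<Sum>\<omega>\<in>\<Omega>. f \<omega>) / real (card \<Omega>)"

lemma avg_mono: "finite \<Omega> \<Longrightarrow> (\<And>\<omega>. \<omega> \<in> \<Omega> \<Longrightarrow> f \<omega> \<le> g \<omega>) \<Longrightarrow> avg \<Omega> f \<le> avg \<Omega> g"
  unfolding avg_def by (intro divide_right_mono sum_mono) auto

lemma avg_nonneg: "(\<And>\<omega>. \<omega> \<in> \<Omega> \<Longrightarrow> 0 \<le> f \<omega>) \<Longrightarrow> 0 \<le> avg \<Omega> f"
  unfolding avg_def by (intro divide_nonneg_nonneg sum_nonneg) auto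

lemma avg_add: "avg \<Omega> (\<lambda>\<omega>. f \<omega> + g \<omega>) = avg \<Omega> f + avg \<Omega> g"
  unfolding avg_def by (simp add: sum.distrib add_divide_distrib)

lemma avg_diff: "avg \<Omega> (\<lambda>\<omega>. f \<omega> - g \<omega>) = avg \<Omega> f - avg \<Omega> g"
  unfolding avg_def by (simp add: sum_subtractf diff_divide_distrib)

lemma avg_cmult: "avg \<Omega> (\<lambda>\<omega>. c * f \<omega>) = c * avg \<Omega> f"
  unfolding avg_def by (simp add: sum_distrib_left)

lemma avg_divide: "avg \<Omega> (\<lambda>\<omega>. f \<omega> / c) = avg \<Omega> f / c"
  unfolding avg_def by (simp add: sum_divide_distrib mult.commute)

lemma avg_const: "finite \<Omega> \<Longrightarrow> \<Omega> \<noteq> {} \<Longrightarrow> avg \<Omega> (\<lambda>\<omega>. c) = c"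
  unfolding avg_def by simp

lemma avg_affine_centered:
  "finite \<Omega> \<Longrightarrow> \<Omega> \<noteq> {} \<Longrightarrow> avg \<Omega> (\<lambda>\<omega>. 1 + t * (X \<omega> - avg \<Omega> X)) = 1"
  by (simp add: avg_add avg_diff avg_cmult avg_const)

lemma exp_avg_le_avg_exp:
  assumes "finite \<Omega>" "\<Omega> \<noteq> {}"
  shows "exp (avg \<Omega> f) \<le> avg \<Omega> (\<lambda>\<omega>. exp (f \<omega>))"
proof -
  have "exp (avg \<Omega> f) * (1 + (f \<omega> - avg \<Omega> f)) \<le> exp (f \<omega>)" for \<omega>
    using mult_left_mono[OF exp_ge_add_one_self[of "f \<omega> - avg \<Omega> f"], of "exp (avg \<Omega> f)"]
    by (simp add: mult_exp_exp)
  then have "avg \<Omega> (\<lambda>\<omega>. exp (avg \<Omega> f) * (1 + 1 * (f \<omega> - avg \<Omega> f))) \<le> avg \<Omega> (\<lambda>\<omega>. exp (f \<omega>))"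
    by (intro avg_mono assms(1)) simp
  then show ?thesis
    unfolding avg_cmult avg_affine_centered[OF assms] by simp
qed

lemma exp_real_sums: "(\<lambda>n. x ^ n / fact n) sums exp (x::real)"
  using exp_converges[of x] by (simp add: divide_inverse mult.commute)

lemma power_div_fact_le_exp:
  fixes x :: real
  assumes "x \<ge> 0"
  shows "x ^ n / fact n \<le> exp x"
proof -
  have "sum (\<lambda>n. x ^ n / fact n) {n} \<le> suminf (\<lambda>n. x ^ n / fact n)"
    by (rule sum_le_suminf) (use exp_real_sums assms in \<open>auto simp: sums_iff\<close>)
  then show ?thesis using exp_real_sums by (simp add: sums_iff)
qed

lemma fact_double_le: "(fact (2*k) :: real) \<le> fact k * (2 * real k) ^ k"
proof -
  have "(fact (2*k) :: nat) = fact k * (fact (2*k) div fact k)"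
    by (simp add: fact_dvd)
  then have "(fact (2*k) :: real) = fact k * real (fact (2*k) div fact k)"
    by (metis of_nat_fact of_nat_mult)
  also have "\<dots> \<le> fact k * real ((2*k) ^ k)"
    using fact_div_fact_le_pow[of k "2*k"] by (intro mult_left_mono) (simp_all only: of_nat_le_iff, simp_all)
  finally show ?thesis by simp
qed

lemma exp_le_second_order: "exp (x::real) \<le> 1 + x + x\<^sup>2 / 2 * exp \<bar>x\<bar>"
proof -
  obtain t where t: "\<bar>t\<bar> \<le> \<bar>x\<bar>" "exp x = (\<Sum>m<2. x ^ m / fact m) + exp t / fact 2 * x ^ 2"
    using Maclaurin_exp_le[of x 2] by blast
  have "exp t / 2 * x\<^sup>2 \<le> exp \<bar>x\<bar> / 2 * x\<^sup>2"
    using t(1) by (intro mult_right_mono) auto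
  then show ?thesis using t(2) by (simp add: numeral_2_eq_2 mult_ac)
qed

lemma exp_le_second_order_small:
  assumes "\<bar>x::real\<bar> \<le> 1"
  shows "exp x \<le> 1 + x + 3/2 * x\<^sup>2"
proof -
  have "exp \<bar>x\<bar> \<le> 3"
    using assms exp_le by (meson exp_le_cancel_iff order.trans)
  then have "x\<^sup>2 / 2 * exp \<bar>x\<bar> \<le> x\<^sup>2 / 2 * 3" by (intro mult_left_mono) auto
  then show ?thesis using exp_le_second_order[of x] by simp
qed

lemma exp_diff_le_half_sum_exp:
  fixes t x y :: real
  shows "exp (t * (x - y)) \<le> (exp (2 * t * x) + exp (- 2 * t * y)) / 2"
proof -
  have "exp (t * (x - y)) = exp (t * x) * exp (- t * y)"
    by (simp add: mult_exp_exp algebra_simps)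
  also have "\<dots> \<le> ((exp (t * x))\<^sup>2 + (exp (- t * y))\<^sup>2) / 2"
    using sum_squares_bound[of "exp (t * x)" "exp (- t * y)"] by simp
  also have "\<dots> = (exp (2 * t * x) + exp (- 2 * t * y)) / 2"
    by (simp add: exp_double[symmetric] mult.assoc)
  finally show ?thesis .
qed

lemma bernoulli_mgf_le:
  fixes t q :: real
  assumes "t \<ge> 0" "q \<ge> 0"
  shows "1 + q * (exp t - 1) \<le> exp (t * q + t\<^sup>2 / 8)"
proof -
  have pos: "1 + q * (exp t - 1) > 0"
    using assms by (smt (verit) mult_nonneg_nonneg one_le_exp_iff)
  have "ln (1 + q * (exp t - 1)) \<le> t * q + t\<^sup>2 / 8"
    using Hoeffdings_lemma_aux[OF assms] by simp
  then show ?thesis using pos by (metis exp_le_cancel_iff exp_ln)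
qed

section \<open>Sampling without replacement\<close>

lemma ratio_pred_le:
  assumes "g \<le> N"
  shows "real (g - 1) / real (N - 1) \<le> real g / real N"
proof (cases "N \<le> 1")
  case True
  then show ?thesis by auto
next
  case False
  then show ?thesis using assms
    by (cases "g = 0") (simp_all add: divide_simps of_nat_diff algebra_simps)
qed

lemma card_transpose_vimage_Int_remove:
  assumes S: "finite S" and a: "a \<in> S" and b: "b \<in> G \<inter> S"
  shows "card (Transposition.transpose a b -` G \<inter> (S - {a})) = card (G \<inter> S) - 1"
proof -
  let ?\<tau> = "Transposition.transpose a b"
  have "?\<tau> -` S = S"
    using permutes_vimage[OF permutes_swap_id[OF a, of b]] b by blast
  then have "?\<tau> -` G \<inter> S = ?\<tau> -` (G \<inter> S)"
    by auto
  also have "\<dots> = ?\<tau> ` (G \<inter> S)"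
    by (simp add: bij_vimage_eq_inv_image image_Int)
  finally have "?\<tau> -` G \<inter> S = ?\<tau> ` (G \<inter> S)" .
  then have "card (?\<tau> -` G \<inter> S) = card (G \<inter> S)"
    by (simp add: card_image)
  moreover have "?\<tau> -` G \<inter> (S - {a}) = (?\<tau> -` G \<inter> S) - {a}" "a \<in> ?\<tau> -` G \<inter> S"
    using a b by auto
  ultimately show ?thesis
    using S by (simp add: card_Diff_singleton_if)
qed

lemma sum_permutes_prod_indicator_insert:
  fixes G :: "'a set"
  assumes "finite S" "a \<notin> S" "finite I" "a \<notin> I"
  shows "(\<Sum>p\<in>{p. p permutes insert a S}. \<Prod>i\<in>insert a I. of_bool (p i \<in> G) :: real)
    = (\<Sum>b\<in>insert a S. of_bool (b \<in> G) *
         (\<Sum>q\<in>{q. q permutes S}. \<Prod>i\<in>I. of_bool (q i \<in> Transposition.transpose a b -` G)))"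
proof -
  have "(\<Prod>i\<in>insert a I. of_bool (Transposition.transpose a b (q i) \<in> G) :: real)
      = of_bool (b \<in> G) * (\<Prod>i\<in>I. of_bool (q i \<in> Transposition.transpose a b -` G))"
    if "q permutes S" for b q
    using permutes_not_in[OF that assms(2)] assms(3,4) by simp
  then show ?thesis
    unfolding sum_over_permutations_insert[OF assms(1,2)] sum_distrib_left
    by (intro sum.cong refl) simp
qed

text \<open>Negative dependence of sampling without replacement: the proportion of permutations
  mapping all of \<open>I\<close> into \<open>G\<close> is at most what independent uniform draws would give.\<close>

lemma sum_permutes_prod_indicator_le:
  fixes S G :: "'a set"
  assumes "finite S" "I \<subseteq> S"
  shows "(\<Sum>p\<in>{p. p permutes S}. \<Prod>i\<in>I. of_bool (p i \<in> G) :: real)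
          \<le> fact (card S) * (real (card (G \<inter> S)) / real (card S)) ^ card I"
  using assms
proof (induction "card I" arbitrary: S I G)
  case 0
  then have "I = {}" using finite_subset by fastforce
  then show ?case by (simp add: card_permutations[OF refl 0(2)])
next
  case (Suc k)
  obtain a where a: "a \<in> I" using Suc.hyps(2) by fastforce
  define S' where "S' = S - {a}"
  define I' where "I' = I - {a}"
  define N where "N = card S"
  define g where "g = card (G \<inter> S)"
  let ?\<tau> = "Transposition.transpose a"
  have aS: "a \<in> S" using a Suc.prems by blast
  have S: "S = insert a S'" "a \<notin> S'" "finite S'" using aS Suc.prems by (auto simp: S'_def)
  have I: "I = insert a I'" "a \<notin> I'" "finite I'"
    using a Suc.prems by (auto simp: I'_def intro: finite_subset)
  have k: "k = card I'" "I' \<subseteq> S'"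
    using Suc.hyps(2) I Suc.prems(2) by (auto simp: S'_def)
  have N: "N \<ge> 1" "card S' = N - 1" "g \<le> N"
    using aS Suc.prems(1) by (auto simp: N_def g_def S'_def Suc_le_eq card_gt_0_iff card_mono)
  have "(\<Sum>p\<in>{p. p permutes S}. \<Prod>i\<in>I. of_bool (p i \<in> G) :: real)
      = (\<Sum>b\<in>S. of_bool (b \<in> G) * (\<Sum>q\<in>{q. q permutes S'}. \<Prod>i\<in>I'. of_bool (q i \<in> ?\<tau> b -` G)))"
    using sum_permutes_prod_indicator_insert[OF S(3,2) I(3,2), of G]
    unfolding S(1)[symmetric] I(1)[symmetric] .
  also have "\<dots> \<le> (\<Sum>b\<in>S. of_bool (b \<in> G) * (fact (N - 1) * (real (g - 1) / real (N - 1)) ^ k))"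
  proof (intro sum_mono)
    fix b assume "b \<in> S"
    then show "of_bool (b \<in> G) * (\<Sum>q\<in>{q. q permutes S'}. \<Prod>i\<in>I'. of_bool (q i \<in> ?\<tau> b -` G))
          \<le> of_bool (b \<in> G) * (fact (N - 1) * (real (g - 1) / real (N - 1)) ^ k)"
      using Suc.hyps(1)[OF k(1) S(3) k(2), of "?\<tau> b -` G"] N(2) k(1)
        card_transpose_vimage_Int_remove[OF Suc.prems(1) aS, of b G]
      by (cases "b \<in> G") (simp_all add: S'_def g_def)
  qed
  also have "\<dots> = real g * (fact (N - 1) * (real (g - 1) / real (N - 1)) ^ k)"
    by (simp add: sum.If_cases Suc.prems(1) g_def Int_commute)
  also have "\<dots> \<le> real g * (fact (N - 1) * (real g / real N) ^ k)"
    by (intro mult_left_mono power_mono ratio_pred_le N(3)) auto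
  also have "\<dots> = fact N * (real g / real N) ^ Suc k"
    using N(1) by (simp add: fact_reduce[of N])
  finally show ?case unfolding N_def g_def Suc.hyps(2)[symmetric] .
qed

lemma sum_permutes_exp_count_le:
  fixes S G :: "'a set" and t :: real
  assumes "finite S" "I \<subseteq> S" "t \<ge> 0"
  shows "(\<Sum>p\<in>{p. p permutes S}. exp (t * (\<Sum>i\<in>I. of_bool (p i \<in> G))))
          \<le> fact (card S) * exp (real (card I) * (t * (real (card (G \<inter> S)) / real (card S)) + t\<^sup>2 / 8))"
proof -
  define q where "q = real (card (G \<inter> S)) / real (card S)"
  define c where "c = exp t - 1"
  have c: "c \<ge> 0" using assms(3) by (simp add: c_def)
  have I: "finite I" using assms finite_subset by blast
  have expand: "exp (t * (\<Sum>i\<in>I. of_bool (p i \<in> G))) = (\<Sum>J\<in>Pow I. c ^ card J * (\<Prod>i\<in>J. of_bool (p i \<in> G)))"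
    for p
  proof -
    have "exp (t * (\<Sum>i\<in>I. of_bool (p i \<in> G))) = (\<Prod>i\<in>I. c * of_bool (p i \<in> G) + 1)"
      unfolding sum_distrib_left exp_sum[OF I] by (intro prod.cong refl) (simp add: c_def)
    also have "\<dots> = (\<Sum>J\<in>Pow I. (\<Prod>i\<in>J. c * of_bool (p i \<in> G)) * (\<Prod>i\<in>I - J. 1))"
      by (rule prod_add[OF I])
    finally show ?thesis by (simp add: prod.distrib)
  qed
  have "(\<Sum>p\<in>{p. p permutes S}. exp (t * (\<Sum>i\<in>I. of_bool (p i \<in> G))))
      = (\<Sum>J\<in>Pow I. c ^ card J * (\<Sum>p\<in>{p. p permutes S}. \<Prod>i\<in>J. of_bool (p i \<in> G)))"
    unfolding expand by (subst sum.swap) (simp add: sum_distrib_left)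
  also have "\<dots> \<le> (\<Sum>J\<in>Pow I. c ^ card J * (fact (card S) * q ^ card J))"
    unfolding q_def using assms(2) c
    by (intro sum_mono mult_left_mono sum_permutes_prod_indicator_le assms(1)) auto
  also have "\<dots> = fact (card S) * (\<Sum>J\<in>Pow I. (\<Prod>i\<in>J. c * q) * (\<Prod>i\<in>I - J. 1))"
    by (simp add: sum_distrib_left power_mult_distrib mult_ac)
  also have "\<dots> = fact (card S) * (\<Prod>i\<in>I. c * q + 1)"
    by (subst prod_add[OF I]) simp
  also have "\<dots> = fact (card S) * (1 + q * (exp t - 1)) ^ card I"
    by (simp add: c_def mult_ac add_ac)
  also have "\<dots> \<le> fact (card S) * exp (t * q + t\<^sup>2 / 8) ^ card I"
    using c assms(3) by (intro mult_left_mono power_mono bernoulli_mgf_le) (auto simp: q_def c_def)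
  finally show ?thesis
    by (simp add: q_def exp_of_nat_mult)
qed

lemma sum_permutes_exp_centered_count_le_nonneg:
  fixes S G :: "'a set" and t :: real
  assumes S: "finite S" "I \<subseteq> S" and t: "t \<ge> 0"
  shows "(\<Sum>p\<in>{p. p permutes S}.
            exp (t * ((\<Sum>i\<in>I. of_bool (p i \<in> G)) - real (card I) * (real (card (G \<inter> S)) / real (card S)))))
          \<le> fact (card S) * exp (real (card I) * t\<^sup>2 / 8)"
proof -
  define m where "m = real (card I) * (real (card (G \<inter> S)) / real (card S))"
  have "(\<Sum>p\<in>{p. p permutes S}. exp (t * ((\<Sum>i\<in>I. of_bool (p i \<in> G)) - m)))
      = exp (- t * m) * (\<Sum>p\<in>{p. p permutes S}. exp (t * (\<Sum>i\<in>I. of_bool (p i \<in> G))))"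
    by (simp add: sum_distrib_left mult_exp_exp right_diff_distrib)
  also have "\<dots> \<le> exp (- t * m) * (fact (card S) * exp (t * m + real (card I) * t\<^sup>2 / 8))"
    using sum_permutes_exp_count_le[OF S t, of G] by (simp add: m_def algebra_simps)
  also have "\<dots> = fact (card S) * exp (real (card I) * t\<^sup>2 / 8)"
    by (simp add: mult_exp_exp[symmetric] exp_minus_inverse mult_ac)
  finally show ?thesis by (simp add: m_def)
qed

lemma sum_permutes_exp_centered_count_le:
  fixes S G :: "'a set" and t :: real
  assumes S: "finite S" "I \<subseteq> S" "S \<noteq> {}"
  shows "(\<Sum>p\<in>{p. p permutes S}.
            exp (t * ((\<Sum>i\<in>I. of_bool (p i \<in> G)) - real (card I) * (real (card (G \<inter> S)) / real (card S)))))
          \<le> fact (card S) * exp (real (card I) * t\<^sup>2 / 8)"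
proof (cases "t \<ge> 0")
  case True
  then show ?thesis by (rule sum_permutes_exp_centered_count_le_nonneg[OF S(1,2)])
next
  case False
  have card_compl: "real (card (- G \<inter> S)) = real (card S) - real (card (G \<inter> S))"
    using S(1) by (simp add: Diff_eq[symmetric] Int_commute card_Diff_subset_Int of_nat_diff card_mono
        flip: Diff_Int2)
  have count_compl: "(\<Sum>i\<in>I. of_bool (p i \<in> G)) = real (card I) - (\<Sum>i\<in>I. of_bool (p i \<in> - G))" for p
  proof -
    have "(\<Sum>i\<in>I. of_bool (p i \<in> G) + of_bool (p i \<in> - G)) = (\<Sum>i\<in>I. 1 :: real)"
      by (intro sum.cong refl) auto
    then show ?thesis by (simp add: sum.distrib)
  qed
  have "t * ((\<Sum>i\<in>I. of_bool (p i \<in> G)) - real (card I) * (real (card (G \<inter> S)) / real (card S)))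
      = (- t) * ((\<Sum>i\<in>I. of_bool (p i \<in> - G)) - real (card I) * (real (card (- G \<inter> S)) / real (card S)))" for p
    using S unfolding count_compl card_compl by (simp add: field_simps card_gt_0_iff)
  then show ?thesis
    using sum_permutes_exp_centered_count_le_nonneg[OF S(1,2), of "- t" "- G"] False by simp
qed

section \<open>Sub-exponential variables on a finite uniform space\<close>

definition SE_uniform :: "'a set \<Rightarrow> ('a \<Rightarrow> real) \<Rightarrow> real \<Rightarrow> bool" where
  "SE_uniform \<Omega> X \<sigma> \<longleftrightarrow> (\<forall>t. \<sigma> * \<bar>t\<bar> \<le> 1 \<longrightarrow>
      avg \<Omega> (\<lambda>\<omega>. exp (t * (X \<omega> - avg \<Omega> X))) \<le> exp (t\<^sup>2 * \<sigma>\<^sup>2))"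

lemma SE_uniformD:
  "SE_uniform \<Omega> X \<sigma> \<Longrightarrow> \<sigma> * \<bar>t\<bar> \<le> 1 \<Longrightarrow> avg \<Omega> (\<lambda>\<omega>. exp (t * (X \<omega> - avg \<Omega> X))) \<le> exp (t\<^sup>2 * \<sigma>\<^sup>2)"
  unfolding SE_uniform_def by blast

lemma SE_uniform_mono:
  assumes X: "SE_uniform \<Omega> X \<sigma>" and "0 \<le> \<sigma>" "\<sigma> \<le> \<sigma>'"
  shows "SE_uniform \<Omega> X \<sigma>'"
  unfolding SE_uniform_def
proof (intro allI impI)
  fix t :: real assume t: "\<sigma>' * \<bar>t\<bar> \<le> 1"
  have "\<sigma> * \<bar>t\<bar> \<le> \<sigma>' * \<bar>t\<bar>" using assms by (intro mult_right_mono) auto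
  then have "avg \<Omega> (\<lambda>\<omega>. exp (t * (X \<omega> - avg \<Omega> X))) \<le> exp (t\<^sup>2 * \<sigma>\<^sup>2)"
    using SE_uniformD[OF X] t by auto
  also have "\<dots> \<le> exp (t\<^sup>2 * \<sigma>'\<^sup>2)" using assms by (auto intro!: mult_left_mono power_mono)
  finally show "avg \<Omega> (\<lambda>\<omega>. exp (t * (X \<omega> - avg \<Omega> X))) \<le> exp (t\<^sup>2 * \<sigma>'\<^sup>2)" .
qed

lemma SE_uniform_cmult:
  assumes X: "SE_uniform \<Omega> X \<sigma>" and c: "c \<ge> 0"
  shows "SE_uniform \<Omega> (\<lambda>\<omega>. c * X \<omega>) (c * \<sigma>)"
  unfolding SE_uniform_def
proof (intro allI impI)
  fix t :: real assume t: "c * \<sigma> * \<bar>t\<bar> \<le> 1"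
  have "\<sigma> * \<bar>t * c\<bar> \<le> 1" using t c by (simp add: abs_mult mult_ac)
  then have "avg \<Omega> (\<lambda>\<omega>. exp ((t * c) * (X \<omega> - avg \<Omega> X))) \<le> exp ((t * c)\<^sup>2 * \<sigma>\<^sup>2)"
    by (rule SE_uniformD[OF X])
  then show "avg \<Omega> (\<lambda>\<omega>. exp (t * (c * X \<omega> - avg \<Omega> (\<lambda>\<omega>. c * X \<omega>)))) \<le> exp (t\<^sup>2 * (c * \<sigma>)\<^sup>2)"
    by (simp add: avg_cmult algebra_simps power_mult_distrib)
qed

lemma SE_uniform_diff:
  assumes fin: "finite \<Omega>" and X: "SE_uniform \<Omega> X a" and Y: "SE_uniform \<Omega> Y b"
    and "a \<ge> 0" "b \<ge> 0"
  shows "SE_uniform \<Omega> (\<lambda>\<omega>. X \<omega> - Y \<omega>) (2 * max a b)"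
  unfolding SE_uniform_def
proof (intro allI impI)
  fix t :: real assume t: "2 * max a b * \<bar>t\<bar> \<le> 1"
  define X' where "X' \<omega> = X \<omega> - avg \<Omega> X" for \<omega>
  define Y' where "Y' \<omega> = Y \<omega> - avg \<Omega> Y" for \<omega>
  have "a * \<bar>t\<bar> \<le> max a b * \<bar>t\<bar>" "b * \<bar>t\<bar> \<le> max a b * \<bar>t\<bar>"
    by (auto intro!: mult_right_mono)
  then have "a * \<bar>2 * t\<bar> \<le> 1" "b * \<bar>- 2 * t\<bar> \<le> 1"
    using t by (auto simp: abs_mult)
  then have X'_mgf: "avg \<Omega> (\<lambda>\<omega>. exp (2 * t * X' \<omega>)) \<le> exp (t\<^sup>2 * (2 * a)\<^sup>2)"
    and Y'_mgf: "avg \<Omega> (\<lambda>\<omega>. exp (- 2 * t * Y' \<omega>)) \<le> exp (t\<^sup>2 * (2 * b)\<^sup>2)"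
    using SE_uniformD[OF X, of "2 * t"] SE_uniformD[OF Y, of "- 2 * t"]
    by (simp_all add: X'_def Y'_def power_mult_distrib mult_ac)
  have "a\<^sup>2 \<le> (max a b)\<^sup>2" "b\<^sup>2 \<le> (max a b)\<^sup>2"
    using assms(4,5) by (auto intro!: power_mono)
  then have "exp (t\<^sup>2 * (2 * a)\<^sup>2) \<le> exp (t\<^sup>2 * (2 * max a b)\<^sup>2)" "exp (t\<^sup>2 * (2 * b)\<^sup>2) \<le> exp (t\<^sup>2 * (2 * max a b)\<^sup>2)"
    by (simp_all add: power_mult_distrib mult_left_mono)
  note bounds = order.trans[OF X'_mgf this(1)] order.trans[OF Y'_mgf this(2)]
  have "avg \<Omega> (\<lambda>\<omega>. exp (t * (X \<omega> - Y \<omega> - avg \<Omega> (\<lambda>\<omega>. X \<omega> - Y \<omega>))))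
      = avg \<Omega> (\<lambda>\<omega>. exp (t * (X' \<omega> - Y' \<omega>)))"
    by (simp add: X'_def Y'_def avg_diff algebra_simps)
  also have "\<dots> \<le> avg \<Omega> (\<lambda>\<omega>. (exp (2 * t * X' \<omega>) + exp (- 2 * t * Y' \<omega>)) / 2)"
    by (intro avg_mono fin exp_diff_le_half_sum_exp)
  also have "\<dots> = (avg \<Omega> (\<lambda>\<omega>. exp (2 * t * X' \<omega>)) + avg \<Omega> (\<lambda>\<omega>. exp (- 2 * t * Y' \<omega>))) / 2"
    by (simp add: avg_divide avg_add)
  also have "\<dots> \<le> exp (t\<^sup>2 * (2 * max a b)\<^sup>2)"
    using bounds by simp
  finally show "avg \<Omega> (\<lambda>\<omega>. exp (t * (X \<omega> - Y \<omega> - avg \<Omega> (\<lambda>\<omega>. X \<omega> - Y \<omega>)))) \<le> exp (t\<^sup>2 * (2 * max a b)\<^sup>2)" .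
qed

lemma SE_uniform_bounded:
  assumes fin: "finite \<Omega>" and ne: "\<Omega> \<noteq> {}" and r: "r > 0"
    and X: "\<And>\<omega>. \<omega> \<in> \<Omega> \<Longrightarrow> 0 \<le> X \<omega> \<and> X \<omega> \<le> r"
  shows "SE_uniform \<Omega> X (2 * r)"
  unfolding SE_uniform_def
proof (intro allI impI)
  fix t :: real assume t: "2 * r * \<bar>t\<bar> \<le> 1"
  define m where "m = avg \<Omega> X"
  have m: "0 \<le> m" "m \<le> r"
    using avg_nonneg[of \<Omega> X] avg_mono[OF fin, of X "\<lambda>_. r"] X by (auto simp: m_def avg_const[OF fin ne])
  have pointwise: "exp (t * (X \<omega> - m)) \<le> 1 + t * (X \<omega> - m) + 3/2 * (t\<^sup>2 * r\<^sup>2)" if "\<omega> \<in> \<Omega>" for \<omega>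
  proof -
    have "\<bar>X \<omega> - m\<bar> \<le> r" using X[OF that] m by auto
    then have "\<bar>t * (X \<omega> - m)\<bar> \<le> \<bar>t\<bar> * r"
      by (simp add: abs_mult mult_left_mono)
    moreover have "\<bar>t\<bar> * r \<le> 1" using t r by (simp add: mult_ac)
    ultimately have "\<bar>t * (X \<omega> - m)\<bar> \<le> 1" "(t * (X \<omega> - m))\<^sup>2 \<le> (\<bar>t\<bar> * r)\<^sup>2"
      by (auto intro: power_mono simp flip: abs_le_square_iff)
    then show ?thesis using exp_le_second_order_small[of "t * (X \<omega> - m)"] by (simp add: power_mult_distrib)
  qed
  have "avg \<Omega> (\<lambda>\<omega>. exp (t * (X \<omega> - m))) \<le> avg \<Omega> (\<lambda>\<omega>. 1 + t * (X \<omega> - m) + 3/2 * (t\<^sup>2 * r\<^sup>2))"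
    by (intro avg_mono fin pointwise)
  also have "\<dots> = 1 + 3/2 * (t\<^sup>2 * r\<^sup>2)"
    using avg_affine_centered[OF fin ne, of t X] by (simp add: avg_add avg_const[OF fin ne] m_def)
  also have "\<dots> \<le> exp (3/2 * (t\<^sup>2 * r\<^sup>2))"
    by (rule exp_ge_add_one_self[THEN order.trans[rotated]]) simp
  also have "\<dots> \<le> exp (t\<^sup>2 * (2 * r)\<^sup>2)"
    by (simp add: power_mult_distrib)
  finally show "avg \<Omega> (\<lambda>\<omega>. exp (t * (X \<omega> - avg \<Omega> X))) \<le> exp (t\<^sup>2 * (2 * r)\<^sup>2)"
    by (simp add: m_def)
qed

lemma exp_centered_le_of_nonneg:
  fixes t w m lam :: real
  assumes "w \<ge> 0" "m \<ge> 0" "lam > 0" "\<bar>t\<bar> \<le> lam / 4"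
  shows "exp (t * (w - m)) \<le> 1 + t * (w - m) + 4 * t\<^sup>2 / lam\<^sup>2 * exp (lam * (w + m))"
proof -
  define y where "y = w + m"
  have y: "y \<ge> 0" "\<bar>w - m\<bar> \<le> y" using assms by (auto simp: y_def)
  have "\<bar>t * (w - m)\<bar> \<le> lam / 4 * y"
    unfolding abs_mult using assms y by (intro mult_mono) auto
  then have exp_abs: "exp \<bar>t * (w - m)\<bar> \<le> exp (lam / 4 * y)" by simp
  have sq: "(t * (w - m))\<^sup>2 \<le> t\<^sup>2 * y\<^sup>2"
    unfolding power_mult_distrib using y by (intro mult_left_mono) (auto simp flip: abs_le_square_iff)
  have "(lam / 2 * y) ^ 2 / fact 2 \<le> exp (lam / 2 * y)"
    using assms y by (intro power_div_fact_le_exp) simp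
  then have y_sq: "y\<^sup>2 \<le> 8 / lam\<^sup>2 * exp (lam / 2 * y)"
    using assms by (simp add: power_mult_distrib power_divide field_simps)
  have "exp (t * (w - m)) \<le> 1 + t * (w - m) + (t * (w - m))\<^sup>2 / 2 * exp \<bar>t * (w - m)\<bar>"
    by (rule exp_le_second_order)
  also have "(t * (w - m))\<^sup>2 / 2 * exp \<bar>t * (w - m)\<bar> \<le> t\<^sup>2 * y\<^sup>2 / 2 * exp (lam / 4 * y)"
    by (intro mult_mono divide_right_mono sq exp_abs) auto
  also have "\<dots> \<le> t\<^sup>2 * (8 / lam\<^sup>2 * exp (lam / 2 * y)) / 2 * exp (lam / 4 * y)"
    by (intro mult_right_mono divide_right_mono mult_left_mono y_sq) auto
  also have "\<dots> = 4 * t\<^sup>2 / lam\<^sup>2 * exp (3 * lam / 4 * y)"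
    by (simp add: mult_exp_exp field_simps)
  also have "\<dots> \<le> 4 * t\<^sup>2 / lam\<^sup>2 * exp (lam * y)"
    using assms y by (intro mult_left_mono) auto
  finally show ?thesis by (simp add: y_def)
qed

lemma SE_uniform_of_exp_moment:
  assumes fin: "finite \<Omega>" and ne: "\<Omega> \<noteq> {}" and lam: "lam > 0" and K: "K \<ge> 1"
    and W: "\<And>\<omega>. \<omega> \<in> \<Omega> \<Longrightarrow> W \<omega> \<ge> 0"
    and moment: "avg \<Omega> (\<lambda>\<omega>. exp (lam * W \<omega>)) \<le> K"
  shows "SE_uniform \<Omega> W (4 * K / lam)"
  unfolding SE_uniform_def
proof (intro allI impI)
  fix t :: real assume t: "4 * K / lam * \<bar>t\<bar> \<le> 1"
  define m where "m = avg \<Omega> W"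
  have m: "m \<ge> 0" unfolding m_def using W by (rule avg_nonneg)
  have exp_m: "exp (lam * m) \<le> K"
    using exp_avg_le_avg_exp[OF fin ne, of "\<lambda>\<omega>. lam * W \<omega>"] moment by (simp add: avg_cmult m_def)
  have "4 * \<bar>t\<bar> \<le> 4 * K * \<bar>t\<bar>" using K by (simp add: mult_right_mono)
  also have "\<dots> \<le> lam" using t lam by (simp add: field_simps)
  finally have t_small: "\<bar>t\<bar> \<le> lam / 4" by simp
  have "exp (t * (W \<omega> - m)) \<le> 1 + t * (W \<omega> - m) + 4 * t\<^sup>2 * K / lam\<^sup>2 * exp (lam * W \<omega>)"
    if "\<omega> \<in> \<Omega>" for \<omega>
  proof -
    have "exp (t * (W \<omega> - m)) \<le> 1 + t * (W \<omega> - m) + 4 * t\<^sup>2 / lam\<^sup>2 * (exp (lam * m) * exp (lam * W \<omega>))"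
      using exp_centered_le_of_nonneg[OF W[OF that] m lam t_small] by (simp add: mult_exp_exp algebra_simps)
    also have "\<dots> \<le> 1 + t * (W \<omega> - m) + 4 * t\<^sup>2 / lam\<^sup>2 * (K * exp (lam * W \<omega>))"
      using exp_m by (intro add_left_mono mult_left_mono mult_right_mono) auto
    finally show ?thesis by simp
  qed
  then have "avg \<Omega> (\<lambda>\<omega>. exp (t * (W \<omega> - m)))
      \<le> avg \<Omega> (\<lambda>\<omega>. 1 + t * (W \<omega> - m) + 4 * t\<^sup>2 * K / lam\<^sup>2 * exp (lam * W \<omega>))"
    by (intro avg_mono fin)
  also have "\<dots> = 1 + 4 * t\<^sup>2 * K / lam\<^sup>2 * avg \<Omega> (\<lambda>\<omega>. exp (lam * W \<omega>))"
    using avg_affine_centered[OF fin ne, of t W] by (simp only: avg_add avg_cmult m_def)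
  also have "\<dots> \<le> 1 + 4 * t\<^sup>2 * K / lam\<^sup>2 * K"
    using moment lam K by (intro add_left_mono mult_left_mono) auto
  also have "\<dots> \<le> exp (4 * t\<^sup>2 * K / lam\<^sup>2 * K)"
    by (rule exp_ge_add_one_self[THEN order.trans[rotated]]) simp
  also have "\<dots> \<le> exp (t\<^sup>2 * (4 * K / lam)\<^sup>2)"
    using K lam by (simp add: field_simps power2_eq_square)
  finally show "avg \<Omega> (\<lambda>\<omega>. exp (t * (W \<omega> - avg \<Omega> W))) \<le> exp (t\<^sup>2 * (4 * K / lam)\<^sup>2)"
    by (simp add: m_def)
qed

lemma avg_even_power_le_of_mgf:
  fixes Z :: "'a \<Rightarrow> real"
  assumes fin: "finite \<Omega>" and v: "v > 0" and k: "k \<ge> 1"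
    and mgf: "\<And>t. avg \<Omega> (\<lambda>\<omega>. exp (t * Z \<omega>)) \<le> exp (t\<^sup>2 * v / 2)"
  shows "avg \<Omega> (\<lambda>\<omega>. Z \<omega> ^ (2 * k)) \<le> 2 * exp 1 ^ k * fact (2 * k) * (v / (2 * k)) ^ k"
proof -
  define t where "t = sqrt (2 * k / v)"
  have t: "t\<^sup>2 = 2 * k / v" using v by (simp add: t_def)
  have c: "(2 * k / v) ^ k / fact (2 * k) > 0" using v k by simp
  have "(t * Z \<omega>) ^ (2 * k) / fact (2 * k) \<le> exp (t * Z \<omega>) + exp (- t * Z \<omega>)" for \<omega>
  proof -
    have "(t * Z \<omega>) ^ (2 * k) / fact (2 * k) = \<bar>t * Z \<omega>\<bar> ^ (2 * k) / fact (2 * k)"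
      by (simp add: power_even_abs)
    also have "\<dots> \<le> exp \<bar>t * Z \<omega>\<bar>"
      by (rule power_div_fact_le_exp) simp
    also have "\<dots> \<le> exp (t * Z \<omega>) + exp (- t * Z \<omega>)"
      by (cases "t * Z \<omega> \<ge> 0") (auto simp: abs_if add_increasing2 add_increasing)
    finally show ?thesis .
  qed
  then have "avg \<Omega> (\<lambda>\<omega>. (t * Z \<omega>) ^ (2 * k) / fact (2 * k))
      \<le> avg \<Omega> (\<lambda>\<omega>. exp (t * Z \<omega>)) + avg \<Omega> (\<lambda>\<omega>. exp (- t * Z \<omega>))"
    unfolding avg_add[symmetric] by (intro avg_mono fin)
  also have "\<dots> \<le> exp (t\<^sup>2 * v / 2) + exp ((- t)\<^sup>2 * v / 2)"
    using mgf[of t] mgf[of "- t"] by simp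
  also have "\<dots> = 2 * exp 1 ^ k"
    using v by (simp add: t exp_of_nat_mult[symmetric])
  also have "avg \<Omega> (\<lambda>\<omega>. (t * Z \<omega>) ^ (2 * k) / fact (2 * k))
      = (2 * k / v) ^ k / fact (2 * k) * avg \<Omega> (\<lambda>\<omega>. Z \<omega> ^ (2 * k))"
    unfolding avg_cmult[symmetric]
    by (rule arg_cong[where f="avg \<Omega>"]) (simp add: fun_eq_iff power_mult_distrib power_mult t power_divide)
  finally show ?thesis
    using c v k by (simp add: field_simps power_divide)
qed

lemma avg_exp_square_le_of_mgf:
  fixes Z :: "'a \<Rightarrow> real"
  assumes fin: "finite \<Omega>" and v: "v > 0"
    and mgf: "\<And>t. avg \<Omega> (\<lambda>\<omega>. exp (t * Z \<omega>)) \<le> exp (t\<^sup>2 * v / 2)"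
  shows "avg \<Omega> (\<lambda>\<omega>. exp ((Z \<omega>)\<^sup>2 / (4 * exp 1 * v))) \<le> 8 / 3"
proof -
  define a where "a = 1 / (4 * exp 1 * v)"
  have a: "a > 0" using v by (simp add: a_def)
  have term_le: "avg \<Omega> (\<lambda>\<omega>. (a * (Z \<omega>)\<^sup>2) ^ k / fact k) \<le> 2 * (1 / 4) ^ k" for k
  proof (cases "k = 0")
    case True
    then show ?thesis by (simp add: avg_def)
  next
    case False
    have "avg \<Omega> (\<lambda>\<omega>. (a * (Z \<omega>)\<^sup>2) ^ k / fact k) = a ^ k / fact k * avg \<Omega> (\<lambda>\<omega>. Z \<omega> ^ (2 * k))"
      by (simp add: avg_cmult avg_divide power_mult_distrib flip: power_mult)
    also have "\<dots> \<le> a ^ k / fact k * (2 * exp 1 ^ k * fact (2 * k) * (v / (2 * k)) ^ k)"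
      using False a by (intro mult_left_mono avg_even_power_le_of_mgf fin v mgf) auto
    also have "\<dots> \<le> a ^ k / fact k * (2 * exp 1 ^ k * (fact k * (2 * real k) ^ k) * (v / (2 * k)) ^ k)"
      using a v by (intro mult_left_mono mult_right_mono fact_double_le) simp_all
    also have "\<dots> = 2 * (a * exp 1 * v) ^ k"
      using False v by (simp add: field_simps power_mult_distrib power_divide)
    also have "\<dots> = 2 * (1 / 4) ^ k"
      using v by (simp add: a_def)
    finally show ?thesis .
  qed
  have "(\<lambda>k. avg \<Omega> (\<lambda>\<omega>. (a * (Z \<omega>)\<^sup>2) ^ k / fact k)) sums avg \<Omega> (\<lambda>\<omega>. exp (a * (Z \<omega>)\<^sup>2))"
    unfolding avg_def by (intro sums_divide sums_sum exp_real_sums)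
  moreover have "(\<lambda>k. 2 * (1 / 4 :: real) ^ k) sums (2 * (1 / (1 - 1 / 4)))"
    by (intro sums_mult geometric_sums) simp
  ultimately have "avg \<Omega> (\<lambda>\<omega>. exp (a * (Z \<omega>)\<^sup>2)) \<le> 2 * (1 / (1 - 1 / 4))"
    by (rule sums_le[OF term_le])
  then show ?thesis by (simp add: a_def)
qed

section \<open>The conditional mean factor\<close>

definition distinct_tuples :: "nat \<Rightarrow> nat \<Rightarrow> nat list set" where
  "distinct_tuples n1 n2 = {l. distinct l \<and> length l = n1 \<and> set l \<subseteq> {..<n2}}"

lemma perm_tuples_eq: "perm_tuples n1 n2 = {p. p permutes {..<n1+n2}} \<times> distinct_tuples n1 n2"
  by (simp add: perm_tuples_def distinct_tuples_def)

lemma finite_distinct_tuples: "finite (distinct_tuples n1 n2)"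
  by (rule finite_subset[OF _ finite_lists_length_eq[of "{..<n2}" n1]]) (auto simp: distinct_tuples_def)

lemma finite_perm_tuples: "finite (perm_tuples n1 n2)"
  unfolding perm_tuples_eq by (intro finite_cartesian_product finite_permutations finite_distinct_tuples) simp

lemma perm_tuples_nonempty:
  assumes "n1 \<le> n2"
  shows "perm_tuples n1 n2 \<noteq> {}"
proof -
  have "(id, [0..<n1]) \<in> perm_tuples n1 n2"
    using assms by (auto simp: perm_tuples_eq distinct_tuples_def permutes_id)
  then show ?thesis by blast
qed

text \<open>The sign \<open>s\<^sub>i\<close> of the proof idea with 0-based indices:
  \<open>D\<^bsub>\<pi>(i)\<^esub> - D\<^bsub>\<pi>(n\<^sub>1 + l\<^sub>i)\<^esub>\<close> has mean \<open>s\<^sub>i (\<mu>\<^sub>P - \<mu>\<^sub>Q)\<close>.\<close>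

definition pair_sign :: "nat \<Rightarrow> (nat \<Rightarrow> nat) \<Rightarrow> nat list \<Rightarrow> nat \<Rightarrow> real" where
  "pair_sign n1 p l i = of_bool (p i < n1) - of_bool (p (n1 + l ! i) < n1)"

definition pair_sign_sum :: "nat \<Rightarrow> (nat \<Rightarrow> nat) \<Rightarrow> nat list \<Rightarrow> real" where
  "pair_sign_sum n1 p l = (\<Sum>i<n1. pair_sign n1 p l i)"

definition pair_sign_sq_sum :: "nat \<Rightarrow> (nat \<Rightarrow> nat) \<Rightarrow> nat list \<Rightarrow> real" where
  "pair_sign_sq_sum n1 p l = (\<Sum>i<n1. (pair_sign n1 p l i)\<^sup>2)"

definition cond_mean_factor :: "nat \<Rightarrow> (nat \<Rightarrow> nat) \<Rightarrow> nat list \<Rightarrow> real" where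
  "cond_mean_factor n1 p l = ((pair_sign_sum n1 p l)\<^sup>2 - pair_sign_sq_sum n1 p l) / (real n1 * (real n1 - 1))"

lemma pair_sign_sq_sum_bounds: "0 \<le> pair_sign_sq_sum n1 p l" "pair_sign_sq_sum n1 p l \<le> real n1"
proof -
  have "(pair_sign n1 p l i)\<^sup>2 \<le> 1" for i
    by (simp add: pair_sign_def of_bool_def)
  then have "pair_sign_sq_sum n1 p l \<le> (\<Sum>i<n1. 1)"
    unfolding pair_sign_sq_sum_def by (intro sum_mono)
  then show "pair_sign_sq_sum n1 p l \<le> real n1" by simp
qed (simp add: pair_sign_sq_sum_def sum_nonneg)

text \<open>The pair-sign sum is the difference of the hypergeometric counts of first-sample labels
  at the positions \<open>{..<n1}\<close> and at the positions \<open>n1 + l ! i\<close>; bounding \<open>exp (t (A - B))\<close>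
  by \<open>(exp (2 t A) + exp (- 2 t B)) / 2\<close> decouples the two counts.\<close>

lemma sum_permutes_exp_pair_sign_sum_le:
  assumes l: "l \<in> distinct_tuples n1 n2" and n1: "n1 \<ge> 1"
  shows "(\<Sum>p\<in>{p. p permutes {..<n1+n2}}. exp (t * pair_sign_sum n1 p l))
          \<le> fact (n1 + n2) * exp (real n1 * t\<^sup>2 / 2)"
proof -
  define S where "S = {..<n1+n2}"
  define G where "G = {..<n1}"
  define R where "R = (\<lambda>i. n1 + l ! i) ` G"
  define m where "m = real n1 * (real (card (G \<inter> S)) / real (card S))"
  define A where "A p = (\<Sum>i\<in>G. of_bool (p i \<in> G) :: real)" for p :: "nat \<Rightarrow> nat"
  define B where "B p = (\<Sum>j\<in>R. of_bool (p j \<in> G) :: real)" for p :: "nat \<Rightarrow> nat"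
  have inj: "inj_on (\<lambda>i. n1 + l ! i) G"
    using l by (auto simp: distinct_tuples_def inj_on_def nth_eq_iff_index_eq G_def)
  have S: "finite S" "S \<noteq> {}" "G \<subseteq> S" "R \<subseteq> S"
    using n1 l nth_mem by (fastforce simp: S_def G_def R_def distinct_tuples_def)+
  have card: "card G = n1" "card R = n1"
    using card_image[OF inj] by (simp_all add: G_def R_def)
  have "B p = (\<Sum>i<n1. of_bool (p (n1 + l ! i) < n1))" for p
    unfolding B_def R_def sum.reindex[OF inj] by (simp add: G_def)
  then have sign_sum: "pair_sign_sum n1 p l = (A p - m) - (B p - m)" for p
    by (simp add: pair_sign_sum_def pair_sign_def sum_subtractf A_def G_def)
  have A_mgf: "(\<Sum>p\<in>{p. p permutes S}. exp (2 * t * (A p - m))) \<le> fact (card S) * exp (real n1 * (2 * t)\<^sup>2 / 8)"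
    using sum_permutes_exp_centered_count_le[OF S(1,3,2), of "2 * t" G] card by (simp add: A_def m_def)
  have B_mgf: "(\<Sum>p\<in>{p. p permutes S}. exp (- 2 * t * (B p - m))) \<le> fact (card S) * exp (real n1 * (2 * t)\<^sup>2 / 8)"
    using sum_permutes_exp_centered_count_le[OF S(1,4,2), of "- 2 * t" G] card by (simp add: B_def m_def)
  have "(\<Sum>p\<in>{p. p permutes S}. exp (t * pair_sign_sum n1 p l))
      \<le> (\<Sum>p\<in>{p. p permutes S}. (exp (2 * t * (A p - m)) + exp (- 2 * t * (B p - m))) / 2)"
    unfolding sign_sum by (intro sum_mono exp_diff_le_half_sum_exp)
  also have "\<dots> = ((\<Sum>p\<in>{p. p permutes S}. exp (2 * t * (A p - m))) + (\<Sum>p\<in>{p. p permutes S}. exp (- 2 * t * (B p - m)))) / 2"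
    by (simp only: sum_divide_distrib[symmetric] sum.distrib)
  also have "\<dots> \<le> fact (card S) * exp (real n1 * (2 * t)\<^sup>2 / 8)"
    using A_mgf B_mgf by simp
  also have "\<dots> = fact (n1 + n2) * exp (real n1 * t\<^sup>2 / 2)"
    by (simp add: S_def power2_eq_square)
  finally show ?thesis by (simp add: S_def)
qed

lemma avg_exp_pair_sign_sum_le:
  assumes "n1 \<ge> 1"
  shows "avg (perm_tuples n1 n2) (\<lambda>\<omega>. exp (t * pair_sign_sum n1 (fst \<omega>) (snd \<omega>))) \<le> exp (t\<^sup>2 * real n1 / 2)"
proof -
  have "(\<Sum>\<omega>\<in>perm_tuples n1 n2. exp (t * pair_sign_sum n1 (fst \<omega>) (snd \<omega>)))
      = (\<Sum>l\<in>distinct_tuples n1 n2. \<Sum>p\<in>{p. p permutes {..<n1+n2}}. exp (t * pair_sign_sum n1 p l))"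
    unfolding perm_tuples_eq by (subst sum.swap) (simp add: sum.cartesian_product split_def)
  also have "\<dots> \<le> (\<Sum>l\<in>distinct_tuples n1 n2. fact (n1 + n2) * exp (real n1 * t\<^sup>2 / 2))"
    by (intro sum_mono sum_permutes_exp_pair_sign_sum_le assms)
  also have "\<dots> = real (card (perm_tuples n1 n2)) * exp (t\<^sup>2 * real n1 / 2)"
    by (simp add: perm_tuples_eq card_cartesian_product card_permutations mult_ac)
  finally show ?thesis
    unfolding avg_def by (cases "card (perm_tuples n1 n2) = 0") (simp_all add: field_simps)
qed

lemma SE_uniform_pair_sign_sum_sq:
  assumes n1: "1 \<le> n1" and n12: "n1 \<le> n2"
  shows "SE_uniform (perm_tuples n1 n2) (\<lambda>\<omega>. (pair_sign_sum n1 (fst \<omega>) (snd \<omega>))\<^sup>2 / real n1)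
           (4 * (8 / 3) / (1 / (4 * exp 1)))"
proof (rule SE_uniform_of_exp_moment[OF finite_perm_tuples perm_tuples_nonempty[OF n12]])
  have "avg (perm_tuples n1 n2) (\<lambda>\<omega>. exp ((pair_sign_sum n1 (fst \<omega>) (snd \<omega>))\<^sup>2 / (4 * exp 1 * real n1)))
      \<le> 8 / 3"
    by (rule avg_exp_square_le_of_mgf[OF finite_perm_tuples _ avg_exp_pair_sign_sum_le[OF n1]]) (use n1 in simp)
  then show "avg (perm_tuples n1 n2)
      (\<lambda>\<omega>. exp (1 / (4 * exp 1) * ((pair_sign_sum n1 (fst \<omega>) (snd \<omega>))\<^sup>2 / real n1))) \<le> 8 / 3"
    by (simp add: mult_ac)
qed simp_all

text \<open>The constant is \<open>2 \<cdot> 2 \<cdot> 4K/\<lambda>\<close> with \<open>K = 8/3\<close> and \<open>\<lambda> = 1/(4e)\<close>: one factor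
  \<open>2\<close> comes from taking a difference, the other from \<open>1/(n\<^sub>1 - 1) \<le> 2/n\<^sub>1\<close>.\<close>

lemma SE_uniform_cond_mean_factor:
  assumes n1: "2 \<le> n1" and n12: "n1 \<le> n2"
  shows "SE_uniform (perm_tuples n1 n2) (\<lambda>\<omega>. cond_mean_factor n1 (fst \<omega>) (snd \<omega>)) (512 * exp 1 / 3 / real n1)"
proof -
  let ?\<Omega> = "perm_tuples n1 n2"
  define S where "S \<omega> = pair_sign_sum n1 (fst \<omega>) (snd \<omega>)" for \<omega>
  define T where "T \<omega> = pair_sign_sq_sum n1 (fst \<omega>) (snd \<omega>) / (real n1 * (real n1 - 1))" for \<omega>
  define \<sigma> where "\<sigma> = 1 / (real n1 - 1) * (4 * (8 / 3) / (1 / (4 * exp 1)))"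
  have fin: "finite ?\<Omega>" and ne: "?\<Omega> \<noteq> {}"
    using finite_perm_tuples perm_tuples_nonempty[OF n12] .
  have n1': "real n1 - 1 > 0" "real n1 > 0" using n1 by auto
  have "1 \<le> n1" using n1 by simp
  from SE_uniform_cmult[OF SE_uniform_pair_sign_sum_sq[OF this n12], of "1 / (real n1 - 1)"] n1'
  have square: "SE_uniform ?\<Omega> (\<lambda>\<omega>. 1 / (real n1 - 1) * ((S \<omega>)\<^sup>2 / real n1)) \<sigma>"
    unfolding \<sigma>_def S_def by simp
  have diagonal: "SE_uniform ?\<Omega> T (2 * (1 / (real n1 - 1)))"
  proof (rule SE_uniform_bounded[OF fin ne])
    fix \<omega>
    note bounds = pair_sign_sq_sum_bounds[of n1 "fst \<omega>" "snd \<omega>"]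
    have "T \<omega> \<le> real n1 / (real n1 * (real n1 - 1))"
      unfolding T_def using bounds n1' by (intro divide_right_mono) auto
    then show "0 \<le> T \<omega> \<and> T \<omega> \<le> 1 / (real n1 - 1)"
      using bounds n1' by (simp add: T_def)
  qed (use n1' in simp)
  have "3 \<le> 64 * exp (1::real)"
    using exp_ge_add_one_self[of "1::real"] by linarith
  then have "2 \<le> 4 * (8 / 3) / (1 / (4 * exp (1::real)))" by simp
  from mult_left_mono[OF this, of "1 / (real n1 - 1)"]
  have \<sigma>_ge: "2 * (1 / (real n1 - 1)) \<le> \<sigma>"
    using n1' by (simp add: \<sigma>_def mult.commute)
  have "(\<lambda>\<omega>. cond_mean_factor n1 (fst \<omega>) (snd \<omega>)) = (\<lambda>\<omega>. 1 / (real n1 - 1) * ((S \<omega>)\<^sup>2 / real n1) - T \<omega>)"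
    by (simp add: fun_eq_iff cond_mean_factor_def S_def T_def diff_divide_distrib)
  with SE_uniform_diff[OF fin square diagonal] \<sigma>_ge n1'
  have "SE_uniform ?\<Omega> (\<lambda>\<omega>. cond_mean_factor n1 (fst \<omega>) (snd \<omega>)) (2 * \<sigma>)"
    by (simp add: max_absorb1)
  moreover have "0 \<le> 2 * \<sigma>" "2 * \<sigma> \<le> 512 * exp 1 / 3 / real n1"
    using \<sigma>_ge n1 n1' by (simp_all add: \<sigma>_def field_simps)
  ultimately show ?thesis
    by (rule SE_uniform_mono)
qed

section \<open>The conditional expectation of the permuted U-statistic\<close>

lemma sum_off_diagonal_products:
  fixes f :: "'a \<Rightarrow> 'b::comm_ring_1"
  assumes "finite A"
  shows "(\<Sum>i\<in>A. \<Sum>j\<in>A - {i}. f i * f j) = (\<Sum>i\<in>A. f i)\<^sup>2 - (\<Sum>i\<in>A. (f i)\<^sup>2)"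
proof -
  have "(\<Sum>i\<in>A. f i)\<^sup>2 = (\<Sum>i\<in>A. (f i)\<^sup>2 + (\<Sum>j\<in>A - {i}. f i * f j))"
    unfolding power2_eq_square sum_product using assms
    by (intro sum.cong refl) (simp add: sum.remove)
  then show ?thesis by (simp add: sum.distrib)
qed

locale two_sample =
  fixes d n1 n2 :: nat and P Q :: "(nat \<Rightarrow> real) measure"
  assumes prob_space_P: "prob_space P" and prob_space_Q: "prob_space Q"
    and integrable_P: "\<And>k. k < d \<Longrightarrow> integrable P (\<lambda>x. x k)"
    and integrable_Q: "\<And>k. k < d \<Longrightarrow> integrable Q (\<lambda>x. x k)"
    and n1_le_n2: "n1 \<le> n2"
begin

definition sample_law :: "nat \<Rightarrow> (nat \<Rightarrow> real) measure" where
  "sample_law m = (if m < n1 then P else Q)"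

definition \<delta> :: "nat \<Rightarrow> real" where
  "\<delta> = mean_vec P - mean_vec Q"

abbreviation "data \<equiv> data_law n1 n2 P Q"
abbreviation "\<Omega> \<equiv> perm_tuples n1 n2"
abbreviation "piL \<equiv> piL_law n1 n2"
abbreviation "joint \<equiv> joint_law n1 n2 P Q"

lemma data_law_eq: "data = PiM {..<n1+n2} sample_law"
  unfolding data_law_def sample_law_def by simp

lemma prob_space_sample_law: "prob_space (sample_law m)"
  by (simp add: sample_law_def prob_space_P prob_space_Q)

sublocale samples: product_sigma_finite sample_law
  unfolding product_sigma_finite_def using prob_space_sample_law prob_space_imp_sigma_finite by blast

lemma integrable_sample_coord: "k < d \<Longrightarrow> integrable (sample_law m) (\<lambda>x. x k)"
  by (simp add: sample_law_def integrable_P integrable_Q)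

lemma mean_sample_law_diff:
  "mean_vec (sample_law a) k - mean_vec (sample_law b) k = (of_bool (a < n1) - of_bool (b < n1)) * \<delta> k"
  by (simp add: sample_law_def \<delta>_def)

lemma integral_coord_mult:
  assumes u: "u < n1 + n2" and v: "v < n1 + n2" and "u \<noteq> v" and k: "k < d"
  shows "integrable data (\<lambda>x. x u k * x v k)"
    and "(\<integral>x. x u k * x v k \<partial>data) = mean_vec (sample_law u) k * mean_vec (sample_law v) k"
proof -
  define f where "f i = (if i = u \<or> i = v then (\<lambda>z::nat \<Rightarrow> real. z k) else (\<lambda>_. 1))" for i
  have f: "integrable (sample_law i) (f i)" for i
    using integrable_sample_coord[OF k] finite_measure.integrable_const[OF
        prob_space.finite_measure[OF prob_space_sample_law], where a="1::real"]
    by (simp add: f_def)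
  have prod_uv: "(\<Prod>i\<in>{..<n1+n2}. g i) = g u * g v" if "\<And>i. i \<noteq> u \<Longrightarrow> i \<noteq> v \<Longrightarrow> g i = 1"
    for g :: "nat \<Rightarrow> real"
  proof -
    have "(\<Prod>i\<in>{..<n1+n2}. g i) = g u * (g v * (\<Prod>i\<in>{..<n1+n2} - {u} - {v}. g i))"
      using u v \<open>u \<noteq> v\<close> by (simp add: prod.remove[of _ u] prod.remove[of _ v])
    also have "(\<Prod>i\<in>{..<n1+n2} - {u} - {v}. g i) = 1"
      using that by (intro prod.neutral) auto
    finally show ?thesis by simp
  qed
  have "(\<Prod>i\<in>{..<n1+n2}. f i (x i)) = x u k * x v k" for x
    using prod_uv[of "\<lambda>i. f i (x i)"] by (simp add: f_def)
  then show "integrable data (\<lambda>x. x u k * x v k)"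
    and "(\<integral>x. x u k * x v k \<partial>data) = mean_vec (sample_law u) k * mean_vec (sample_law v) k"
    using samples.product_integrable_prod[of "{..<n1+n2}" f] samples.product_integral_prod[of "{..<n1+n2}" f]
      prod_uv[of "\<lambda>i. integral\<^sup>L (sample_law i) (f i)"] \<open>u \<noteq> v\<close> f
    by (simp_all add: data_law_eq f_def mean_vec_def prob_space.prob_space[OF prob_space_sample_law])
qed

lemma integral_diff_mult_diff:
  assumes "a < n1 + n2" "b < n1 + n2" "c < n1 + n2" "e < n1 + n2"
    and "a \<noteq> c" "a \<noteq> e" "b \<noteq> c" "b \<noteq> e" and k: "k < d"
  shows "integrable data (\<lambda>x. (x a k - x b k) * (x c k - x e k))"
    and "(\<integral>x. (x a k - x b k) * (x c k - x e k) \<partial>data)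
          = (mean_vec (sample_law a) k - mean_vec (sample_law b) k) * (mean_vec (sample_law c) k - mean_vec (sample_law e) k)"
proof -
  have expand: "(\<lambda>x::nat \<Rightarrow> nat \<Rightarrow> real. (x a k - x b k) * (x c k - x e k))
      = (\<lambda>x. ((x a k * x c k - x a k * x e k) - x b k * x c k) + x b k * x e k)"
    by (simp add: fun_eq_iff algebra_simps)
  note ac = integral_coord_mult[OF assms(1) assms(3) assms(5) k]
    and ae = integral_coord_mult[OF assms(1) assms(4) assms(6) k]
    and bc = integral_coord_mult[OF assms(2) assms(3) assms(7) k]
    and be = integral_coord_mult[OF assms(2) assms(4) assms(8) k]
  show "integrable data (\<lambda>x. (x a k - x b k) * (x c k - x e k))"
    unfolding expand using ac ae bc be by (intro Bochner_Integration.integrable_add Bochner_Integration.integrable_diff)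
  show "(\<integral>x. (x a k - x b k) * (x c k - x e k) \<partial>data)
          = (mean_vec (sample_law a) k - mean_vec (sample_law b) k) * (mean_vec (sample_law c) k - mean_vec (sample_law e) k)"
    unfolding expand using ac ae bc be
    by (simp add: Bochner_Integration.integral_add Bochner_Integration.integral_diff
        Bochner_Integration.integrable_diff algebra_simps)
qed

lemma perm_tuple_indices:
  assumes pl: "(p, l) \<in> \<Omega>" and i: "i < n1" and j: "j < n1" and ij: "i \<noteq> j"
  shows "p i < n1 + n2" "p (n1 + l ! i) < n1 + n2"
    "p i \<noteq> p j" "p i \<noteq> p (n1 + l ! j)" "p (n1 + l ! i) \<noteq> p (n1 + l ! j)"
proof -
  have perm: "p permutes {..<n1+n2}" and l: "distinct l" "length l = n1" "set l \<subseteq> {..<n2}"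
    using pl by (auto simp: perm_tuples_def)
  have "l ! i < n2" "l ! i \<noteq> l ! j"
    using l i j ij nth_mem by (fastforce simp: nth_eq_iff_index_eq)+
  then show "p i < n1 + n2" "p (n1 + l ! i) < n1 + n2"
    "p i \<noteq> p j" "p i \<noteq> p (n1 + l ! j)" "p (n1 + l ! i) \<noteq> p (n1 + l ! j)"
    using permutes_in_image[OF perm] permutes_inj[OF perm] i ij by (auto dest: injD)
qed

lemma integral_pair_products:
  assumes pl: "(p, l) \<in> \<Omega>" and "i < n1" "j < n1" "i \<noteq> j" "k < d"
  shows "integrable data (\<lambda>x. (x (p i) k - x (p (n1 + l ! i)) k) * (x (p j) k - x (p (n1 + l ! j)) k))"
    and "(\<integral>x. (x (p i) k - x (p (n1 + l ! i)) k) * (x (p j) k - x (p (n1 + l ! j)) k) \<partial>data)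
          = pair_sign n1 p l i * pair_sign n1 p l j * (\<delta> k * \<delta> k)"
  using integral_diff_mult_diff[of "p i" "p (n1 + l ! i)" "p j" "p (n1 + l ! j)" k]
    perm_tuple_indices[OF pl assms(2-4)] perm_tuple_indices[OF pl assms(3,2)] assms(4,5)
  by (simp_all add: mean_sample_law_diff pair_sign_def mult_ac)

lemma integral_U_stat:
  assumes pl: "(p, l) \<in> \<Omega>"
  shows "integrable data (U_stat d n1 p l)"
    and "(\<integral>x. U_stat d n1 p l x \<partial>data) = ipd d \<delta> \<delta> * cond_mean_factor n1 p l"
proof -
  define c where "c = 1 / (real n1 * (real n1 - 1))"
  define f where "f i j k x = (x (p i) k - x (p (n1 + l ! i)) k) * (x (p j) k - x (p (n1 + l ! j)) k)"
    for i j k and x :: "nat \<Rightarrow> nat \<Rightarrow> real"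
  have U_eq: "U_stat d n1 p l = (\<lambda>x. c * (\<Sum>i<n1. \<Sum>j\<in>{..<n1} - {i}. \<Sum>k<d. f i j k x))"
    by (simp add: U_stat_def ipd_def c_def f_def fun_eq_iff)
  have int: "integrable data (f i j k)"
    and val: "(\<integral>x. f i j k x \<partial>data) = pair_sign n1 p l i * pair_sign n1 p l j * (\<delta> k * \<delta> k)"
    if "i < n1" "j \<in> {..<n1} - {i}" "k < d" for i j k
    using integral_pair_products[OF pl, of i j k] that by (auto simp: f_def[abs_def])
  show "integrable data (U_stat d n1 p l)"
    unfolding U_eq using int by (intro Bochner_Integration.integrable_mult_right Bochner_Integration.integrable_sum) auto
  have "(\<integral>x. U_stat d n1 p l x \<partial>data) = c * (\<Sum>i<n1. \<Sum>j\<in>{..<n1} - {i}. \<Sum>k<d. \<integral>x. f i j k x \<partial>data)"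
  proof -
    have inner: "(\<integral>x. (\<Sum>k<d. f i j k x) \<partial>data) = (\<Sum>k<d. \<integral>x. f i j k x \<partial>data)"
      if "i < n1" "j \<in> {..<n1} - {i}" for i j
      by (rule Bochner_Integration.integral_sum) (use int that in auto)
    have middle: "(\<integral>x. (\<Sum>j\<in>{..<n1} - {i}. \<Sum>k<d. f i j k x) \<partial>data)
        = (\<Sum>j\<in>{..<n1} - {i}. \<integral>x. (\<Sum>k<d. f i j k x) \<partial>data)" if "i < n1" for i
      by (rule Bochner_Integration.integral_sum) (use int that in \<open>auto intro!: Bochner_Integration.integrable_sum\<close>)
    have outer: "(\<integral>x. (\<Sum>i<n1. \<Sum>j\<in>{..<n1} - {i}. \<Sum>k<d. f i j k x) \<partial>data)
        = (\<Sum>i<n1. \<integral>x. (\<Sum>j\<in>{..<n1} - {i}. \<Sum>k<d. f i j k x) \<partial>data)"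
      by (rule Bochner_Integration.integral_sum) (use int in \<open>auto intro!: Bochner_Integration.integrable_sum\<close>)
    show ?thesis
      unfolding U_eq Bochner_Integration.integral_mult_right_zero outer
      using middle inner by (intro arg_cong[where f="\<lambda>z. c * z"] sum.cong refl) auto
  qed
  also have "\<dots> = c * (\<Sum>i<n1. \<Sum>j\<in>{..<n1} - {i}. \<Sum>k<d. pair_sign n1 p l i * pair_sign n1 p l j * (\<delta> k * \<delta> k))"
    using val by (intro arg_cong[where f="\<lambda>z. c * z"] sum.cong refl) auto
  also have "\<dots> = ipd d \<delta> \<delta> * (c * (\<Sum>i<n1. \<Sum>j\<in>{..<n1} - {i}. pair_sign n1 p l i * pair_sign n1 p l j))"
    by (simp add: ipd_def sum_distrib_left sum_distrib_right mult_ac)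
  finally show "(\<integral>x. U_stat d n1 p l x \<partial>data) = ipd d \<delta> \<delta> * cond_mean_factor n1 p l"
    by (simp add: sum_off_diagonal_products cond_mean_factor_def pair_sign_sum_def pair_sign_sq_sum_def c_def)
qed

lemma set_pmf_perm_tuples: "set_pmf (pmf_of_set \<Omega>) = \<Omega>"
  using finite_perm_tuples perm_tuples_nonempty[OF n1_le_n2] by simp

lemma joint_law_eq: "joint = data \<Otimes>\<^sub>M piL"
  by (simp add: joint_law_def)

sublocale data_piL: pair_prob_space data piL
proof -
  interpret data: prob_space data
    unfolding data_law_eq by (rule prob_space_PiM) (rule prob_space_sample_law)
  interpret piL: prob_space piL
    unfolding piL_law_def by (rule prob_space_measure_pmf)
  show "pair_prob_space data piL" by unfold_locales
qed

lemma integrable_piL: "integrable piL (f :: _ \<Rightarrow> real)"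
  unfolding piL_law_def by (rule integrable_measure_pmf_finite) (simp add: set_pmf_perm_tuples finite_perm_tuples)

lemma integral_piL: "(\<integral>y. f y \<partial>piL) = avg \<Omega> f"
  unfolding piL_law_def avg_def by (rule integral_pmf_of_set[OF perm_tuples_nonempty[OF n1_le_n2] finite_perm_tuples])

lemma AE_piL_iff: "(AE y in piL. Pr y) \<longleftrightarrow> (\<forall>y\<in>\<Omega>. Pr y)"
  unfolding piL_law_def by (simp add: AE_measure_pmf_iff set_pmf_perm_tuples)

lemma integrable_joint_of_sections:
  fixes h :: "_ \<Rightarrow> real"
  assumes h: "h \<in> borel_measurable joint" and sections: "\<And>y. y \<in> \<Omega> \<Longrightarrow> integrable data (\<lambda>x. h (x, y))"
  shows "integrable joint h"
  unfolding joint_law_eq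
proof (rule data_piL.Fubini_integrable)
  show "h \<in> borel_measurable (data \<Otimes>\<^sub>M piL)" using h by (simp add: joint_law_eq)
  show "AE x in data. integrable piL (\<lambda>y. h (x, y))" by (simp add: integrable_piL)
  have "integrable data (\<lambda>x. avg \<Omega> (\<lambda>y. norm (h (x, y))))"
    unfolding avg_def using sections
    by (intro Bochner_Integration.integrable_divide Bochner_Integration.integrable_sum integrable_norm) auto
  then show "integrable data (\<lambda>x. \<integral>y. norm (h (x, y)) \<partial>piL)"
    by (simp add: integral_piL)
qed

lemma integral_joint_iterated:
  fixes h :: "_ \<Rightarrow> real"
  assumes "integrable joint h"
  shows "(\<integral>\<omega>. h \<omega> \<partial>joint) = (\<integral>y. (\<integral>x. h (x, y) \<partial>data) \<partial>piL)"
  using data_piL.integral_snd[of "\<lambda>x y. h (x, y)"] assms by (simp add: joint_law_eq)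

lemma measurable_sample_coord:
  assumes k: "k < d"
  shows "(\<lambda>\<omega>. fst \<omega> (g (snd \<omega>)) k) \<in> borel_measurable joint"
proof (rule measurable_compose_countable[where f="\<lambda>m \<omega>. fst \<omega> m k" and g="\<lambda>\<omega>. g (snd \<omega>)"])
  show "(\<lambda>\<omega>. g (snd \<omega>)) \<in> measurable joint (count_space UNIV)"
  proof -
    have "g \<circ> snd \<in> measurable (data \<Otimes>\<^sub>M piL) (count_space UNIV)"
      by (rule measurable_comp[OF measurable_snd]) (simp add: piL_law_def)
    then show ?thesis by (simp add: comp_def joint_law_eq)
  qed
  fix m :: nat
  show "(\<lambda>\<omega>. fst \<omega> m k) \<in> borel_measurable joint"
  proof (cases "m < n1 + n2")
    case True
    have "(\<lambda>x. x m) \<in> measurable data (sample_law m)"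
      unfolding data_law_eq using True by (intro measurable_component_singleton) simp
    moreover have "(\<lambda>z. z k) \<in> borel_measurable (sample_law m)"
      using integrable_sample_coord[OF k] by (rule borel_measurable_integrable)
    ultimately have "(\<lambda>x. x m k) \<in> borel_measurable data"
      using measurable_comp by (fastforce simp: comp_def)
    from measurable_comp[OF measurable_fst this] show ?thesis by (simp add: comp_def joint_law_eq)
  next
    case False
    have "fst \<omega> m k = undefined k" if "\<omega> \<in> space joint" for \<omega>
      using that False by (auto simp: joint_law_eq data_law_eq space_pair_measure space_PiM PiE_def extensional_def)
    then show ?thesis
      using measurable_cong[of joint "\<lambda>\<omega>. fst \<omega> m k" "\<lambda>_. undefined k" borel] by simp
  qed
qed

lemma integrable_U_joint: "integrable joint (U_joint d n1)"
proof (rule integrable_joint_of_sections)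
  show "U_joint d n1 \<in> borel_measurable joint"
    unfolding U_joint_def U_stat_def ipd_def fun_diff_def
    by (intro borel_measurable_times borel_measurable_const borel_measurable_sum borel_measurable_diff
        measurable_sample_coord[where g="\<lambda>y. fst y _"] measurable_sample_coord[where g="\<lambda>y. fst y (n1 + snd y ! _)"])
      auto
qed (use integral_U_stat(1) in \<open>auto simp: U_joint_def\<close>)

abbreviation "piL_events \<equiv> piL_sigma n1 n2 P Q"

lemma snd_in_space_piL: "snd \<in> space joint \<rightarrow> space piL"
  by (auto simp: joint_law_eq space_pair_measure)

lemma subalgebra_piL_events: "subalgebra joint piL_events"
  unfolding subalgebra_def piL_sigma_def sets_vimage_algebra2[OF snd_in_space_piL]
  using measurable_sets[OF measurable_snd[of data piL]] by (auto simp: joint_law_eq)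

lemma sigma_finite_subalgebra_piL_events: "sigma_finite_subalgebra joint piL_events"
proof -
  have "finite_measure_subalgebra joint piL_events"
    unfolding finite_measure_subalgebra_def finite_measure_subalgebra_axioms_def
    using subalgebra_piL_events data_piL.P.finite_measure_axioms by (simp add: joint_law_eq)
  then show ?thesis by (rule finite_measure_subalgebra_is_sigma_finite)
qed

lemma measurable_piL_events_snd: "(\<lambda>\<omega>. h (snd \<omega>) :: real) \<in> borel_measurable piL_events"
proof -
  have "snd \<in> measurable piL_events piL"
    unfolding piL_sigma_def by (rule measurable_vimage_algebra1[OF snd_in_space_piL])
  moreover have "h \<in> borel_measurable piL" by (simp add: piL_law_def)
  ultimately show ?thesis using measurable_comp by (fastforce simp: comp_def)
qed

lemma measurable_joint_snd: "(\<lambda>\<omega>. h (snd \<omega>) :: real) \<in> borel_measurable joint"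
  by (rule measurable_from_subalg[OF subalgebra_piL_events measurable_piL_events_snd])

lemma integrable_joint_snd: "integrable joint (\<lambda>\<omega>. h (snd \<omega>) :: real)"
  by (rule integrable_joint_of_sections[OF measurable_joint_snd]) (simp add: data_piL.M1.integrable_const)

lemma integral_joint_snd: "(\<integral>\<omega>. h (snd \<omega>) \<partial>joint) = avg \<Omega> h"
  using integral_joint_iterated[OF integrable_joint_snd, of h] data_piL.M1.prob_space by (simp add: integral_piL)

definition cond_mean :: "(nat \<Rightarrow> nat) \<times> nat list \<Rightarrow> real" where
  "cond_mean y = ipd d \<delta> \<delta> * cond_mean_factor n1 (fst y) (snd y)"

lemma AE_E_Lpi_eq_cond_mean: "AE \<omega> in joint. E_Lpi d n1 n2 P Q \<omega> = cond_mean (snd \<omega>)"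
  unfolding E_Lpi_def
proof (rule sigma_finite_subalgebra.real_cond_exp_charact[OF sigma_finite_subalgebra_piL_events])
  show "integrable joint (U_joint d n1)" by (rule integrable_U_joint)
  show "integrable joint (\<lambda>\<omega>. cond_mean (snd \<omega>))" by (rule integrable_joint_snd)
  show "(\<lambda>\<omega>. cond_mean (snd \<omega>)) \<in> borel_measurable piL_events" by (rule measurable_piL_events_snd)
  fix A assume "A \<in> sets piL_events"
  then obtain B where B: "A = snd -` B \<inter> space joint"
    unfolding piL_sigma_def sets_vimage_algebra2[OF snd_in_space_piL] by blast
  have indicator_A: "indicator A \<omega> = (indicator B (snd \<omega>) :: real)" if "\<omega> \<in> space joint" for \<omega>
    using that by (simp add: B indicator_def)
  have "integrable joint (\<lambda>\<omega>. indicator A \<omega> *\<^sub>R U_joint d n1 \<omega>)"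
    using \<open>A \<in> sets piL_events\<close> subalgebra_piL_events
    by (intro integrable_mult_indicator integrable_U_joint) (auto simp: subalgebra_def)
  then have integrable_B: "integrable joint (\<lambda>\<omega>. indicator B (snd \<omega>) * U_joint d n1 \<omega>)"
    by (rule Bochner_Integration.integrable_cong[THEN iffD1, rotated -1]) (simp_all add: indicator_A)
  have "(\<integral>\<omega>\<in>A. U_joint d n1 \<omega> \<partial>joint) = (\<integral>\<omega>. indicator B (snd \<omega>) * U_joint d n1 \<omega> \<partial>joint)"
    unfolding set_lebesgue_integral_def by (intro Bochner_Integration.integral_cong refl) (simp add: indicator_A)
  also have "\<dots> = (\<integral>y. (\<integral>x. indicator B y * U_joint d n1 (x, y) \<partial>data) \<partial>piL)"
    using integral_joint_iterated[OF integrable_B] by simp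
  also have "\<dots> = (\<integral>y. indicator B y * cond_mean y \<partial>piL)"
  proof (rule integral_cong_AE)
    show "AE y in piL. (\<integral>x. indicator B y * U_joint d n1 (x, y) \<partial>data) = indicator B y * cond_mean y"
      unfolding AE_piL_iff using integral_U_stat(2) by (auto simp: U_joint_def cond_mean_def)
  qed (simp_all add: piL_law_def)
  also have "\<dots> = (\<integral>\<omega>. indicator B (snd \<omega>) * cond_mean (snd \<omega>) \<partial>joint)"
    using integral_joint_snd[of "\<lambda>y. indicator B y * cond_mean y"] by (simp add: integral_piL)
  also have "\<dots> = (\<integral>\<omega>\<in>A. cond_mean (snd \<omega>) \<partial>joint)"
    unfolding set_lebesgue_integral_def by (intro Bochner_Integration.integral_cong refl) (simp add: indicator_A)
  finally show "(\<integral>\<omega>\<in>A. U_joint d n1 \<omega> \<partial>joint) = (\<integral>\<omega>\<in>A. cond_mean (snd \<omega>) \<partial>joint)" .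
qed

lemma SE_joint_of_SE_uniform:
  assumes h: "SE_uniform \<Omega> h \<sigma>" and X: "X \<in> borel_measurable joint"
    and X_eq: "AE \<omega> in joint. X \<omega> = h (snd \<omega>)"
  shows "SE joint X \<sigma>"
  unfolding SE_def
proof (intro allI impI conjI)
  fix t :: real assume t: "\<sigma> * \<bar>t\<bar> \<le> 1"
  define g where "g y = exp (t * (h y - avg \<Omega> h))" for y
  have "(\<integral>\<omega>. X \<omega> \<partial>joint) = avg \<Omega> h"
    using integral_cong_AE[OF X measurable_joint_snd[of h] X_eq] integral_joint_snd[of h] by simp
  then have AE_eq: "AE \<omega> in joint. exp (t * (X \<omega> - (\<integral>\<omega>'. X \<omega>' \<partial>joint))) = g (snd \<omega>)"
    using X_eq by (auto simp: g_def elim: eventually_mono)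
  have "(\<lambda>\<omega>. exp (t * (X \<omega> - (\<integral>\<omega>'. X \<omega>' \<partial>joint)))) \<in> borel_measurable joint"
    using X by (intro measurable_compose[OF _ borel_measurable_exp] borel_measurable_times
        borel_measurable_diff borel_measurable_const)
  note cong = integrable_cong_AE[OF this measurable_joint_snd[of g] AE_eq]
    integral_cong_AE[OF this measurable_joint_snd[of g] AE_eq]
  show "integrable joint (\<lambda>\<omega>. exp (t * (X \<omega> - (\<integral>\<omega>'. X \<omega>' \<partial>joint))))"
    using cong(1) integrable_joint_snd[of g] by simp
  have "(\<integral>\<omega>. exp (t * (X \<omega> - (\<integral>\<omega>'. X \<omega>' \<partial>joint))) \<partial>joint) = avg \<Omega> g"
    using cong(2) integral_joint_snd[of g] by simp
  also have "\<dots> \<le> exp (t\<^sup>2 * \<sigma>\<^sup>2)"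
    unfolding g_def using SE_uniformD[OF h t] .
  finally show "(\<integral>\<omega>. exp (t * (X \<omega> - (\<integral>\<omega>'. X \<omega>' \<partial>joint))) \<partial>joint) \<le> exp (t\<^sup>2 * \<sigma>\<^sup>2)" .
qed

lemma SE_E_Lpi:
  assumes "2 \<le> n1"
  shows "SE joint (E_Lpi d n1 n2 P Q) (512 * exp 1 / 3 * ipd d \<delta> \<delta> / real n1)"
proof (rule SE_joint_of_SE_uniform[OF _ _ AE_E_Lpi_eq_cond_mean])
  have "ipd d \<delta> \<delta> \<ge> 0"
    unfolding ipd_def by (intro sum_nonneg) simp
  from SE_uniform_cmult[OF SE_uniform_cond_mean_factor[OF assms n1_le_n2] this]
  show "SE_uniform \<Omega> cond_mean (512 * exp 1 / 3 * ipd d \<delta> \<delta> / real n1)"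
    by (simp add: cond_mean_def[abs_def] mult_ac)
  show "E_Lpi d n1 n2 P Q \<in> borel_measurable joint"
    unfolding E_Lpi_def by (rule borel_measurable_cond_exp2)
qed

end

theorem mainTheorem5:
  "\<exists>C'>0. \<forall>(d::nat) (n1::nat) (n2::nat) (P::(nat \<Rightarrow> real) measure) (Q::(nat \<Rightarrow> real) measure).
     2 \<le> n1 \<longrightarrow> n1 \<le> n2 \<longrightarrow>
     prob_space P \<longrightarrow> sets P = sets borel \<longrightarrow>
     prob_space Q \<longrightarrow> sets Q = sets borel \<longrightarrow>
     subgaussian_vec d P \<longrightarrow> subgaussian_vec d Q \<longrightarrow>
     SE (joint_law n1 n2 P Q) (E_Lpi d n1 n2 P Q)
        (C' * ipd d (mean_vec P - mean_vec Q) (mean_vec P - mean_vec Q) / real n1)"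
proof (intro exI[of _ "512 * exp 1 / 3"] conjI allI impI)
  fix d n1 n2 :: nat and P Q :: "(nat \<Rightarrow> real) measure"
  assume n1: "2 \<le> n1" and "n1 \<le> n2" "prob_space P" "prob_space Q"
    and "subgaussian_vec d P" "subgaussian_vec d Q"
  \<comment> \<open>Sub-Gaussianity is only used for the integrability of the coordinates.\<close>
  then have "two_sample d n1 n2 P Q"
    unfolding two_sample_def subgaussian_vec_def by blast
  then interpret two_sample d n1 n2 P Q .
  show "SE (joint_law n1 n2 P Q) (E_Lpi d n1 n2 P Q)
      (512 * exp 1 / 3 * ipd d (mean_vec P - mean_vec Q) (mean_vec P - mean_vec Q) / real n1)"
    using SE_E_Lpi[OF n1] by (simp add: \<delta>_def)
qed simp

end
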